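(* Let $B$ be a catacondensed flat hexagonal complex (equivalently, a catacondensed chemical hexagonal complex). Then $B$ is Kekulean, i.e. the skeleton graph of $B$ has a perfect matching.
   Context: Polygonal complexes are described by schemes. Fix a finite alphabet $A$; each symbol $a\in A$ has two literals $a^+$ and $a^-$, each the inverse of the other. A word is a cyclic sequence of literals and represents an oriented polygon whose sides are labelled by the literals in order; a scheme is a finite list of words and represents the polygonal complex obtained by taking one polygon per word and gluing together all sides that carry the same symbol. The gluing is parallel if the two occurrences have the same exponent and antiparallel otherwise. Two schemes represent the same complex if one is obtained from the other by permuting words, cyclically rotating a word, renaming symbols, inverting all occurrences of one symbol, or reversing a word while inverting all of its literals. The skeleton graph of the complex has the edges (symbols) and the vertices (corners of polygons, after gluing) as its edges and vertices. A scheme/complex is: - connected, if it cannot be split into two nonempty subschemes with no symbol in common; - flat, if each symbol occurs at most twice, i.e. every edge lies in at most two polygons; - hexagonal, if every word has exactly six literals; - catacondensed, if whenever two literals $a,b$ occur consecutively in some word, at least one of the symbols $a,b$ occurs only once in the scheme (geometrically, no vertex belongs to three hexagons, so each vertex lies in at most two hexagonal faces). A catacondensed flat hexagonal complex is a connected, flat, hexagonal, catacondensed scheme. Its skeleton then has maximum degree at most $3$. The complex need not be planar or orientable; for example it may contain untwisted cyclacene or Möbius (twisted) cyclacene rings, and it may determine a surface with boundary of any genus. A complex is Kekulean if its skeleton graph admits a perfect matching (a Kekulé structure). *)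

theory Defs
  imports Main
begin

text \<open>A literal is a pair (a, s) of a symbol a and a sign s
  (True = a^+, False = a^-). A word is a list of literals read cyclically,
  a scheme is a list of words. Positions (i, j) index the j-th literal of the
  i-th word; the corner (i, j) of polygon i is the corner at which the j-th
  side starts (when walking along the word).\<close>

type_synonym 'a literal = "'a \<times> bool"
type_synonym 'a word = "'a literal list"
type_synonym 'a scheme = "'a word list"

definition occs :: "'a scheme \<Rightarrow> (nat \<times> nat) set" where
  "occs S = {(i, j). i < length S \<and> j < length (S ! i)}"

definition corners :: "'a scheme \<Rightarrow> (nat \<times> nat) set" where
  "corners S = occs S"

definition sym_at :: "'a scheme \<Rightarrow> nat \<times> nat \<Rightarrow> 'a" where
  "sym_at S p = fst (S ! fst p ! snd p)"

definition sign_at :: "'a scheme \<Rightarrow> nat \<times> nat \<Rightarrow> bool" where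
  "sign_at S p = snd (S ! fst p ! snd p)"

definition next_corner :: "'a scheme \<Rightarrow> nat \<times> nat \<Rightarrow> nat \<times> nat" where
  "next_corner S p = (fst p, Suc (snd p) mod length (S ! fst p))"

text \<open>Tail and head corner of the edge carried by the side at position p,
  oriented according to the symbol (positive literal: along the word).\<close>
definition tail_at :: "'a scheme \<Rightarrow> nat \<times> nat \<Rightarrow> nat \<times> nat" where
  "tail_at S p = (if sign_at S p then p else next_corner S p)"

definition head_at :: "'a scheme \<Rightarrow> nat \<times> nat \<Rightarrow> nat \<times> nat" where
  "head_at S p = (if sign_at S p then next_corner S p else p)"

text \<open>Gluing sides with the same symbol identifies tails with tails and heads
  with heads (this covers parallel and antiparallel gluings).\<close>
definition glue :: "'a scheme \<Rightarrow> ((nat \<times> nat) \<times> (nat \<times> nat)) set" where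
  "glue S = {(tail_at S p, tail_at S q) | p q. p \<in> occs S \<and> q \<in> occs S \<and> sym_at S p = sym_at S q}
          \<union> {(head_at S p, head_at S q) | p q. p \<in> occs S \<and> q \<in> occs S \<and> sym_at S p = sym_at S q}"

definition vertex_of :: "'a scheme \<Rightarrow> nat \<times> nat \<Rightarrow> (nat \<times> nat) set" where
  "vertex_of S c = (glue S)\<^sup>* `` {c}"

definition vertices :: "'a scheme \<Rightarrow> (nat \<times> nat) set set" where
  "vertices S = vertex_of S ` corners S"

definition symbols :: "'a scheme \<Rightarrow> 'a set" where
  "symbols S = sym_at S ` occs S"

definition edge_ends :: "'a scheme \<Rightarrow> 'a \<Rightarrow> (nat \<times> nat) set set" where
  "edge_ends S a =
     {vertex_of S (tail_at S p) | p. p \<in> occs S \<and> sym_at S p = a}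
   \<union> {vertex_of S (head_at S p) | p. p \<in> occs S \<and> sym_at S p = a}"

text \<open>Perfect matching of a multigraph with vertex set V, edge set E and
  endpoint map ends (loops have a single endpoint and are excluded).\<close>
definition perfect_matching ::
  "'v set \<Rightarrow> 'e set \<Rightarrow> ('e \<Rightarrow> 'v set) \<Rightarrow> 'e set \<Rightarrow> bool" where
  "perfect_matching V E ends M \<longleftrightarrow>
     M \<subseteq> E \<and> (\<forall>e\<in>M. card (ends e) = 2) \<and> (\<forall>v\<in>V. \<exists>!e. e \<in> M \<and> v \<in> ends e)"

definition kekulean :: "'a scheme \<Rightarrow> bool" where
  "kekulean S \<longleftrightarrow> (\<exists>M. perfect_matching (vertices S) (symbols S) (edge_ends S) M)"

definition word_symbols :: "'a word \<Rightarrow> 'a set" where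
  "word_symbols w = fst ` set w"

definition scheme_connected :: "'a scheme \<Rightarrow> bool" where
  "scheme_connected S \<longleftrightarrow>
     (\<forall>I. I \<subseteq> {..<length S} \<and> I \<noteq> {} \<and> I \<noteq> {..<length S} \<longrightarrow>
        (\<exists>i\<in>I. \<exists>j\<in>{..<length S} - I. word_symbols (S ! i) \<inter> word_symbols (S ! j) \<noteq> {}))"

definition occ_count :: "'a scheme \<Rightarrow> 'a \<Rightarrow> nat" where
  "occ_count S a = card {p \<in> occs S. sym_at S p = a}"

definition flat :: "'a scheme \<Rightarrow> bool" where
  "flat S \<longleftrightarrow> (\<forall>a. occ_count S a \<le> 2)"

definition hexagonal :: "'a scheme \<Rightarrow> bool" where
  "hexagonal S \<longleftrightarrow> (\<forall>w\<in>set S. length w = 6)"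

definition catacondensed :: "'a scheme \<Rightarrow> bool" where
  "catacondensed S \<longleftrightarrow>
     (\<forall>p\<in>occs S. occ_count S (sym_at S p) = 1 \<or> occ_count S (sym_at S (next_corner S p)) = 1)"

definition cata_flat_hex_complex :: "'a scheme \<Rightarrow> bool" where
  "cata_flat_hex_complex S \<longleftrightarrow>
     scheme_connected S \<and> flat S \<and> hexagonal S \<and> catacondensed S"

end

theory Submission
  imports Defs
begin

text \<open>Each hexagon \<open>i\<close> carries one of its two Kekule structures, the sides of even index if
  \<open>\<sigma> i\<close> holds and those of odd index otherwise, and an edge of the complex is matched iff every
  hexagon containing it selects it. Since the complex is catacondensed, every corner lies on at most
  one shared side. A vertex on no shared side is a corner of a single hexagon and is covered by
  exactly one of the two sides there. A vertex on a shared side \<open>s\<close> consists of one corner in each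
  of the two hexagons of \<open>s\<close>; besides \<open>s\<close> it meets one unshared side in each of them, and exactly
  one of these three edges is matched as soon as one of the two hexagons selects \<open>s\<close>.

  Choosing \<open>\<sigma>\<close> so that every shared edge is selected by one of its hexagons is a 2-SAT problem
  with one clause per shared edge. The shared sides of a hexagon are pairwise non-adjacent, so they
  either all have the same parity or there are exactly two of them, in opposite position. Such a
  2-SAT instance is satisfiable: the two clauses containing a hexagon of the second kind resolve
  to a clause without it.\<close>

text \<open>A 2-SAT instance: the literal \<open>l \<in> L\<close> asserts \<open>var l = pol l\<close>, and \<open>partner\<close> groups the
  literals into the clauses \<open>{l, partner l}\<close>.\<close>

definition perfect_pairing :: "'l set \<Rightarrow> ('l \<Rightarrow> 'l) \<Rightarrow> bool" where
  "perfect_pairing L partner \<longleftrightarrow>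
     (\<forall>l\<in>L. partner l \<in> L \<and> partner l \<noteq> l \<and> partner (partner l) = l)"

definition pure_or_balanced :: "'l set \<Rightarrow> ('l \<Rightarrow> 'v) \<Rightarrow> ('l \<Rightarrow> bool) \<Rightarrow> bool" where
  "pure_or_balanced L var pol \<longleftrightarrow>
     (\<forall>v. (\<forall>l\<in>L. \<forall>l'\<in>L. var l = v \<and> var l' = v \<longrightarrow> pol l = pol l') \<or>
          (\<exists>x y. {l\<in>L. var l = v} = {x, y} \<and> pol x \<noteq> pol y))"

lemma pure_or_balanced_remove_var:
  assumes "pure_or_balanced L var pol"
  shows "pure_or_balanced (L - {l. var l = v}) var pol"
  unfolding pure_or_balanced_def
proof
  fix w
  show "(\<forall>l\<in>L - {l. var l = v}. \<forall>l'\<in>L - {l. var l = v}. var l = w \<and> var l' = w \<longrightarrow> pol l = pol l') \<or>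
        (\<exists>x y. {l \<in> L - {l. var l = v}. var l = w} = {x, y} \<and> pol x \<noteq> pol y)"
  proof (cases "w = v")
    case False
    then have "{l \<in> L - {l. var l = v}. var l = w} = {l\<in>L. var l = w}" by auto
    then show ?thesis using assms unfolding pure_or_balanced_def by auto
  qed simp
qed

lemma perfect_pairing_remove_pair:
  assumes "perfect_pairing L partner" "x \<in> L" "partner x = y"
  shows "perfect_pairing (L - {x, y}) partner"
  using assms unfolding perfect_pairing_def by auto metis

lemma perfect_pairing_resolve:
  assumes pairing: "perfect_pairing L partner" and "x \<in> L" "y \<in> L" "x \<noteq> y" "partner x \<noteq> y"
  shows "perfect_pairing (L - {x, y}) (partner(partner x := partner y, partner y := partner x))"
proof -
  have p: "partner l \<in> L" "partner l \<noteq> l" "partner (partner l) = l" if "l \<in> L" for l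
    using pairing that unfolding perfect_pairing_def by auto
  let ?a = "partner x" and ?b = "partner y"
  have ab: "?a \<in> L - {x, y}" "?b \<in> L - {x, y}" "?a \<noteq> ?b"
    using assms(2-5) p[of x] p[of y] by auto
  have "partner l \<in> L - {x, y, ?a, ?b}" if "l \<in> L - {x, y, ?a, ?b}" for l
    using that p[of l] p[of x] p[of y] \<open>x \<in> L\<close> \<open>y \<in> L\<close> by auto
  then show ?thesis using ab p unfolding perfect_pairing_def by auto
qed

lemma pure_literals_satisfiable:
  assumes "pure_or_balanced L var pol"
    and no_balanced: "\<not> (\<exists>v x y. {l\<in>L. var l = v} = {x, y} \<and> pol x \<noteq> pol y)"
  shows "\<exists>\<sigma>. \<forall>l\<in>L. \<sigma> (var l) = pol l"
proof (intro exI[of _ "\<lambda>v. \<exists>l'\<in>L. var l' = v \<and> pol l'"] ballI)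
  fix l assume "l \<in> L"
  from assms(1) have "(\<forall>a\<in>L. \<forall>b\<in>L. var a = var l \<and> var b = var l \<longrightarrow> pol a = pol b) \<or>
      (\<exists>x y. {a\<in>L. var a = var l} = {x, y} \<and> pol x \<noteq> pol y)"
    unfolding pure_or_balanced_def by (rule spec)
  then have "\<forall>a\<in>L. \<forall>b\<in>L. var a = var l \<and> var b = var l \<longrightarrow> pol a = pol b"
    using no_balanced by blast
  with \<open>l \<in> L\<close> show "(\<exists>l'\<in>L. var l' = var l \<and> pol l') = pol l" by blast
qed

lemma tautology_extends_assignment:
  fixes pol :: "'l \<Rightarrow> bool"
  assumes "perfect_pairing L partner" and x: "x \<in> L" "partner x = y"
    and "var x = var y" "pol x \<noteq> pol y"
    and \<sigma>: "\<forall>l\<in>L - {x, y}. \<sigma> (var l) = pol l \<or> \<sigma> (var (partner l)) = pol (partner l)"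
  shows "\<forall>l\<in>L. \<sigma> (var l) = pol l \<or> \<sigma> (var (partner l)) = pol (partner l)"
proof
  have "partner y = x" using assms(1) x unfolding perfect_pairing_def by blast
  fix l assume "l \<in> L"
  show "\<sigma> (var l) = pol l \<or> \<sigma> (var (partner l)) = pol (partner l)"
  proof (cases "l \<in> {x, y}")
    case True
    then show ?thesis using x(2) \<open>partner y = x\<close> assms(4,5)
      by (cases "\<sigma> (var x)"; cases "pol x"; cases "pol y") auto
  next
    case False
    then show ?thesis using \<sigma> \<open>l \<in> L\<close> by blast
  qed
qed

lemma resolution_extends_assignment:
  fixes partner :: "'l \<Rightarrow> 'l" and x y :: 'l and var :: "'l \<Rightarrow> 'v" and \<sigma> :: "'v \<Rightarrow> bool"
  defines "partner' \<equiv> partner(partner x := partner y, partner y := partner x)"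
  assumes pairing: "perfect_pairing L partner"
    and x: "x \<in> L" "var x = v" and y: "y \<in> L" "var y = v" and "pol x \<noteq> pol y" "partner x \<noteq> y"
    and only_v: "\<And>l. l \<in> L - {x, y} \<Longrightarrow> var l \<noteq> v"
    and \<sigma>: "\<forall>l\<in>L - {x, y}. \<sigma> (var l) = pol l \<or> \<sigma> (var (partner' l)) = pol (partner' l)"
  defines "\<tau> \<equiv> \<sigma>(v := (if \<sigma> (var (partner x)) = pol (partner x) then pol y else pol x))"
  shows "\<forall>l\<in>L. \<tau> (var l) = pol l \<or> \<tau> (var (partner l)) = pol (partner l)"
proof
  let ?a = "partner x" and ?b = "partner y"
  have pairs: "partner l \<in> L" "partner l \<noteq> l" "partner (partner l) = l" if "l \<in> L" for l
    using pairing that unfolding perfect_pairing_def by auto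
  have "x \<noteq> y" using x y \<open>pol x \<noteq> pol y\<close> by auto
  have ab: "?a \<in> L - {x, y}" "?b \<in> L - {x, y}" "?a \<noteq> ?b"
    using \<open>partner x \<noteq> y\<close> pairs[OF x(1)] pairs[OF y(1)] \<open>x \<noteq> y\<close> by auto
  have \<tau>_other: "\<tau> (var l) = \<sigma> (var l)" if "l \<in> L - {x, y}" for l
    using only_v[OF that] unfolding \<tau>_def by simp
  have resolvent: "\<sigma> (var ?a) = pol ?a \<or> \<sigma> (var ?b) = pol ?b"
    using \<sigma> ab unfolding partner'_def by auto
  fix l assume "l \<in> L"
  show "\<tau> (var l) = pol l \<or> \<tau> (var (partner l)) = pol (partner l)"
  proof (cases "l \<in> {x, y, ?a, ?b}")
    case True
    have "\<tau> v = (if \<sigma> (var ?a) = pol ?a then pol y else pol x)"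
      unfolding \<tau>_def by simp
    then show ?thesis
      using True x(2) y(2) resolvent \<tau>_other[OF ab(1)] \<tau>_other[OF ab(2)]
        pairs(3)[OF x(1)] pairs(3)[OF y(1)]
      by (cases "\<sigma> (var ?a) = pol ?a") auto
  next
    case False
    then have "l \<in> L - {x, y}" "partner l \<in> L - {x, y}" "partner' l = partner l"
      using \<open>l \<in> L\<close> pairs[OF \<open>l \<in> L\<close>] pairs(3)[OF x(1)] pairs(3)[OF y(1)]
      unfolding partner'_def by auto
    then show ?thesis using \<sigma> \<tau>_other by metis
  qed
qed

lemma paired_clauses_satisfiable:
  assumes "finite L" "perfect_pairing L partner" "pure_or_balanced L var pol"
  shows "\<exists>\<sigma>. \<forall>l\<in>L. \<sigma> (var l) = pol l \<or> \<sigma> (var (partner l)) = pol (partner l)"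
  using assms
proof (induction "card L" arbitrary: L partner rule: less_induct)
  case less
  show ?case
  proof (cases "\<exists>v x y. {l\<in>L. var l = v} = {x, y} \<and> pol x \<noteq> pol y")
    case False
    from pure_literals_satisfiable[OF less.prems(3) this]
    obtain \<sigma> where "\<forall>l\<in>L. \<sigma> (var l) = pol l" ..
    then show ?thesis by (intro exI[of _ \<sigma>]) simp
  next
    case True
    then obtain v x y where xy: "{l\<in>L. var l = v} = {x, y}" "pol x \<noteq> pol y" by blast
    then have x: "x \<in> L" "var x = v" and y: "y \<in> L" "var y = v" and "x \<noteq> y" by auto
    have L_xy: "L - {x, y} = L - {l. var l = v}" using xy(1) by blast
    have finite: "finite (L - {x, y})" using less.prems(1) by simp
    have smaller: "card (L - {x, y}) < card L"
      using less.prems(1) x(1) y(1) \<open>x \<noteq> y\<close> by (metis Diff_insert2 card_Diff2_less)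
    have balanced: "pure_or_balanced (L - {x, y}) var pol"
      unfolding L_xy by (rule pure_or_balanced_remove_var[OF less.prems(3)])
    note IH = less.hyps[OF smaller finite _ balanced]
    show ?thesis
    proof (cases "partner x = y")
      case True
      obtain \<sigma> where \<sigma>: "\<forall>l\<in>L - {x, y}. \<sigma> (var l) = pol l \<or> \<sigma> (var (partner l)) = pol (partner l)"
        using IH[OF perfect_pairing_remove_pair[OF less.prems(2) x(1) True]] ..
      have "var x = var y" using x(2) y(2) by simp
      from tautology_extends_assignment[OF less.prems(2) x(1) True this xy(2) \<sigma>]
      show ?thesis by (rule exI[of _ \<sigma>])
    next
      case False
      obtain \<sigma> where \<sigma>: "\<forall>l\<in>L - {x, y}. \<sigma> (var l) = pol l \<or>
          \<sigma> (var ((partner(partner x := partner y, partner y := partner x)) l)) =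
          pol ((partner(partner x := partner y, partner y := partner x)) l)"
        using IH[OF perfect_pairing_resolve[OF less.prems(2) x(1) y(1) \<open>x \<noteq> y\<close> False]] ..
      have only_v: "var l \<noteq> v" if "l \<in> L - {x, y}" for l
        using that L_xy by blast
      show ?thesis
        by (rule exI, rule resolution_extends_assignment[OF less.prems(2) x y xy(2) False only_v \<sigma>])
    qed
  qed
qed

definition prev_corner :: "'a scheme \<Rightarrow> nat \<times> nat \<Rightarrow> nat \<times> nat" where
  "prev_corner S p = (fst p, (snd p + length (S ! fst p) - 1) mod length (S ! fst p))"

definition selected_side :: "(nat \<Rightarrow> bool) \<Rightarrow> nat \<times> nat \<Rightarrow> bool" where
  "selected_side \<sigma> p \<longleftrightarrow> \<sigma> (fst p) = even (snd p)"

definition kekule_edges :: "'a scheme \<Rightarrow> (nat \<Rightarrow> bool) \<Rightarrow> 'a set" where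
  "kekule_edges S \<sigma> = {a \<in> symbols S. \<forall>p\<in>occs S. sym_at S p = a \<longrightarrow> selected_side \<sigma> p}"

definition shared :: "'a scheme \<Rightarrow> nat \<times> nat \<Rightarrow> bool" where
  "shared S p \<longleftrightarrow> (\<exists>q\<in>occs S. q \<noteq> p \<and> sym_at S q = sym_at S p)"

definition partner :: "'a scheme \<Rightarrow> nat \<times> nat \<Rightarrow> nat \<times> nat" where
  "partner S p = (SOME q. q \<in> occs S \<and> q \<noteq> p \<and> sym_at S q = sym_at S p)"

definition glued_ends :: "'a scheme \<Rightarrow> nat \<times> nat \<Rightarrow> nat \<times> nat \<Rightarrow> nat \<times> nat \<Rightarrow> nat \<times> nat \<Rightarrow> bool" where
  "glued_ends S p q c d \<longleftrightarrow>
     (c = tail_at S p \<and> d = tail_at S q) \<or> (c = head_at S p \<and> d = head_at S q)"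

definition glued_corners :: "'a scheme \<Rightarrow> nat \<times> nat \<Rightarrow> (nat \<times> nat) set" where
  "glued_corners S c = insert c
     {d. \<exists>p\<in>occs S. \<exists>q\<in>occs S. p \<noteq> q \<and> sym_at S p = sym_at S q \<and> glued_ends S p q c d}"

lemma finite_occs: "finite (occs S)"
proof -
  have "occs S = (SIGMA i:{..<length S}. {..<length (S ! i)})"
    unfolding occs_def by auto
  then show ?thesis by simp
qed

lemma tail_head_at: "{tail_at S p, head_at S p} = {p, next_corner S p}"
  unfolding tail_at_def head_at_def by auto

lemma glue_iff:
  "(c, d) \<in> glue S \<longleftrightarrow> (\<exists>p\<in>occs S. \<exists>q\<in>occs S. sym_at S p = sym_at S q \<and> glued_ends S p q c d)"
  unfolding glue_def glued_ends_def by blast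

lemma sym_glue: "sym (glue S)"
  unfolding sym_def glue_iff glued_ends_def by metis

lemma glued_ends_touch:
  "glued_ends S p q c d \<Longrightarrow> (c = p \<or> c = next_corner S p) \<and> (d = q \<or> d = next_corner S q)"
  unfolding glued_ends_def tail_at_def head_at_def by auto

lemma vertex_of_eq_if_glue:
  assumes "(c, d) \<in> glue S"
  shows "vertex_of S c = vertex_of S d"
proof -
  have "(d, c) \<in> glue S" using assms sym_glue unfolding sym_def by blast
  then show ?thesis
    using assms unfolding vertex_of_def by (auto intro: converse_rtrancl_into_rtrancl)
qed

lemma vertex_of_eq_iff: "vertex_of S c = vertex_of S d \<longleftrightarrow> d \<in> vertex_of S c"
proof
  assume "d \<in> vertex_of S c"
  then have cd: "(c, d) \<in> (glue S)\<^sup>*" unfolding vertex_of_def by simp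
  then have dc: "(d, c) \<in> (glue S)\<^sup>*" using symD[OF sym_rtrancl[OF sym_glue]] by blast
  show "vertex_of S c = vertex_of S d"
    unfolding vertex_of_def using cd dc by (auto intro: rtrancl_trans)
qed (auto simp: vertex_of_def)

lemma edge_ends_sym_at:
  assumes "p \<in> occs S"
  shows "edge_ends S (sym_at S p) = vertex_of S ` {p, next_corner S p}"
proof -
  have "vertex_of S (tail_at S q) = vertex_of S (tail_at S p)"
    and "vertex_of S (head_at S q) = vertex_of S (head_at S p)"
    if "q \<in> occs S" "sym_at S q = sym_at S p" for q
  proof -
    have "(tail_at S q, tail_at S p) \<in> glue S" "(head_at S q, head_at S p) \<in> glue S"
      unfolding glue_def using that assms by blast+
    then show "vertex_of S (tail_at S q) = vertex_of S (tail_at S p)"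
      and "vertex_of S (head_at S q) = vertex_of S (head_at S p)"
      by (simp_all add: vertex_of_eq_if_glue)
  qed
  then have "{vertex_of S (tail_at S q) |q. q \<in> occs S \<and> sym_at S q = sym_at S p} = {vertex_of S (tail_at S p)}"
    and "{vertex_of S (head_at S q) |q. q \<in> occs S \<and> sym_at S q = sym_at S p} = {vertex_of S (head_at S p)}"
    using assms by blast+
  then have "edge_ends S (sym_at S p) = vertex_of S ` {tail_at S p, head_at S p}"
    unfolding edge_ends_def by auto
  then show ?thesis by (simp only: tail_head_at)
qed

lemma glued_ends_back:
  "glued_ends S p q c d \<Longrightarrow> glued_ends S q p d e \<Longrightarrow> tail_at S q \<noteq> head_at S q \<Longrightarrow> e = c"
  unfolding glued_ends_def by auto

lemma glued_ends_unique:
  "glued_ends S p q c d \<Longrightarrow> glued_ends S p q c d' \<Longrightarrow> tail_at S p \<noteq> head_at S p \<Longrightarrow> d' = d"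
  unfolding glued_ends_def by auto

lemma glued_corners_subset_vertex_of: "glued_corners S c \<subseteq> vertex_of S c"
  unfolding glued_corners_def vertex_of_def using glue_iff by blast

lemma edge_ends_iff:
  "v \<in> edge_ends S a \<longleftrightarrow>
     (\<exists>p\<in>occs S. sym_at S p = a \<and> (v = vertex_of S p \<or> v = vertex_of S (next_corner S p)))"
  unfolding edge_ends_def tail_at_def head_at_def by auto

lemma shared_partner:
  assumes "shared S p"
  shows "partner S p \<in> occs S" "partner S p \<noteq> p" "sym_at S (partner S p) = sym_at S p"
proof -
  have "\<exists>q. q \<in> occs S \<and> q \<noteq> p \<and> sym_at S q = sym_at S p"
    using assms unfolding shared_def by blast
  from someI_ex[OF this] show "partner S p \<in> occs S" "partner S p \<noteq> p" "sym_at S (partner S p) = sym_at S p"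
    unfolding partner_def by blast+
qed

lemma shared_if_same_symbol:
  "p \<in> occs S \<Longrightarrow> q \<in> occs S \<Longrightarrow> p \<noteq> q \<Longrightarrow> sym_at S q = sym_at S p \<Longrightarrow> shared S p \<and> shared S q"
  unfolding shared_def by metis

lemma kekule_edge_iff_unshared:
  "p \<in> occs S \<Longrightarrow> \<not> shared S p \<Longrightarrow> sym_at S p \<in> kekule_edges S \<sigma> \<longleftrightarrow> selected_side \<sigma> p"
  unfolding kekule_edges_def symbols_def shared_def by auto

lemma occ_count_eq_1_iff:
  assumes "p \<in> occs S"
  shows "occ_count S (sym_at S p) = 1 \<longleftrightarrow> \<not> shared S p"
proof -
  let ?A = "{x \<in> occs S. sym_at S x = sym_at S p}"
  have "p \<in> ?A" using assms by simp
  have "card ?A = 1 \<longleftrightarrow> ?A = {p}"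
  proof
    assume "card ?A = 1"
    then obtain x where "?A = {x}" by (auto simp: card_1_singleton_iff)
    with \<open>p \<in> ?A\<close> show "?A = {p}" by auto
  qed simp
  also have "\<dots> \<longleftrightarrow> \<not> shared S p"
    unfolding shared_def using \<open>p \<in> ?A\<close> by auto
  finally show ?thesis unfolding occ_count_def .
qed

locale flat_scheme =
  fixes S :: "'a scheme"
  assumes flat: "flat S"
begin

lemma same_symbol_cases:
  assumes "p \<in> occs S" "q \<in> occs S" "r \<in> occs S" "p \<noteq> q"
    and "sym_at S q = sym_at S p" "sym_at S r = sym_at S p"
  shows "r = p \<or> r = q"
proof (rule ccontr)
  assume "\<not> (r = p \<or> r = q)"
  then have "card {p, q, r} = 3" using \<open>p \<noteq> q\<close> by auto
  moreover have "{p, q, r} \<subseteq> {x \<in> occs S. sym_at S x = sym_at S p}" using assms by auto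
  then have "card {p, q, r} \<le> occ_count S (sym_at S p)"
    unfolding occ_count_def by (intro card_mono) (simp_all add: finite_occs)
  moreover have "occ_count S (sym_at S p) \<le> 2" using flat unfolding flat_def by auto
  ultimately show False by simp
qed

lemma partner_eq:
  "p \<in> occs S \<Longrightarrow> q \<in> occs S \<Longrightarrow> p \<noteq> q \<Longrightarrow> sym_at S q = sym_at S p \<Longrightarrow> partner S p = q"
  using same_symbol_cases[of p q "partner S p"] shared_partner[of S p] shared_if_same_symbol by metis

lemma kekule_edge_iff_shared:
  "p \<in> occs S \<Longrightarrow> q \<in> occs S \<Longrightarrow> p \<noteq> q \<Longrightarrow> sym_at S q = sym_at S p \<Longrightarrow>
    sym_at S p \<in> kekule_edges S \<sigma> \<longleftrightarrow> selected_side \<sigma> p \<and> selected_side \<sigma> q"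
  using same_symbol_cases[of p q] unfolding kekule_edges_def symbols_def by auto

lemma perfect_pairing_partner: "perfect_pairing {p \<in> occs S. shared S p} (partner S)"
  unfolding perfect_pairing_def
proof (intro ballI)
  fix p assume "p \<in> {p \<in> occs S. shared S p}"
  then have p: "p \<in> occs S" "shared S p" by auto
  note q = shared_partner[OF p(2)]
  have "shared S (partner S p)"
    using shared_if_same_symbol[OF p(1) q(1) q(2)[symmetric] q(3)] by blast
  moreover have "partner S (partner S p) = p"
    using partner_eq[OF q(1) p(1) q(2) q(3)[symmetric]] .
  ultimately show "partner S p \<in> {p \<in> occs S. shared S p} \<and> partner S p \<noteq> p \<and> partner S (partner S p) = p"
    using q by blast
qed

end

lemma less_6_cases: "(j::nat) < 6 \<Longrightarrow> j = 0 \<or> j = 1 \<or> j = 2 \<or> j = 3 \<or> j = 4 \<or> j = 5"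
  by linarith

lemma nonadjacent_hexagon_sides:
  fixes j k m :: nat
  assumes "j < 6" "k < 6" "m < 6" "even j \<noteq> even k"
    and "k \<noteq> Suc j mod 6" "j \<noteq> Suc k mod 6" "m \<noteq> Suc j mod 6" "m \<noteq> Suc k mod 6"
    and "j \<noteq> Suc m mod 6" "k \<noteq> Suc m mod 6"
  shows "m = j \<or> m = k"
  using assms by (auto dest!: less_6_cases)

locale hexagonal_scheme =
  fixes S :: "'a scheme"
  assumes hexagonal: "hexagonal S"
begin

lemma length_word: "p \<in> occs S \<Longrightarrow> length (S ! fst p) = 6"
  using hexagonal unfolding hexagonal_def occs_def by auto

lemma occs_hexagonal_iff: "p \<in> occs S \<longleftrightarrow> fst p < length S \<and> snd p < 6"
  using hexagonal unfolding hexagonal_def occs_def by auto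

lemma next_corner_hexagonal: "p \<in> occs S \<Longrightarrow> next_corner S p = (fst p, Suc (snd p) mod 6)"
  using length_word unfolding next_corner_def by simp

lemma prev_corner_hexagonal: "p \<in> occs S \<Longrightarrow> prev_corner S p = (fst p, (snd p + 5) mod 6)"
  using length_word unfolding prev_corner_def by (simp add: add.commute)

lemma next_corner_in_occs: "p \<in> occs S \<Longrightarrow> next_corner S p \<in> occs S"
  by (simp add: next_corner_hexagonal occs_hexagonal_iff)

lemma prev_corner_in_occs: "p \<in> occs S \<Longrightarrow> prev_corner S p \<in> occs S"
  by (simp add: prev_corner_hexagonal occs_hexagonal_iff)

lemma next_prev_corner: "p \<in> occs S \<Longrightarrow> next_corner S (prev_corner S p) = p"
  by (cases p) (auto simp: next_corner_hexagonal prev_corner_hexagonal prev_corner_in_occs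
      occs_hexagonal_iff dest!: less_6_cases)

lemma prev_next_corner: "p \<in> occs S \<Longrightarrow> prev_corner S (next_corner S p) = p"
  by (cases p) (auto simp: next_corner_hexagonal prev_corner_hexagonal next_corner_in_occs
      occs_hexagonal_iff dest!: less_6_cases)

lemma next_corner_neq: "p \<in> occs S \<Longrightarrow> next_corner S p \<noteq> p"
  by (cases p) (auto simp: next_corner_hexagonal occs_hexagonal_iff dest!: less_6_cases)

lemma selected_side_next_corner:
  "p \<in> occs S \<Longrightarrow> selected_side \<sigma> (next_corner S p) \<longleftrightarrow> \<not> selected_side \<sigma> p"
  by (cases p) (auto simp: selected_side_def next_corner_hexagonal occs_hexagonal_iff dest!: less_6_cases)

lemma selected_side_prev_corner:
  "p \<in> occs S \<Longrightarrow> selected_side \<sigma> (prev_corner S p) \<longleftrightarrow> \<not> selected_side \<sigma> p"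
  by (cases p) (auto simp: selected_side_def prev_corner_hexagonal occs_hexagonal_iff dest!: less_6_cases)

lemma sides_at_corner_iff:
  "p \<in> occs S \<Longrightarrow> c \<in> occs S \<Longrightarrow> (c = p \<or> c = next_corner S p) \<longleftrightarrow> (p = c \<or> p = prev_corner S c)"
  using next_prev_corner prev_next_corner by metis

lemma tail_neq_head_at: "p \<in> occs S \<Longrightarrow> tail_at S p \<noteq> head_at S p"
  using next_corner_neq[of p] unfolding tail_at_def head_at_def by auto

lemma glued_corners_subset_occs: "c \<in> occs S \<Longrightarrow> glued_corners S c \<subseteq> occs S"
  unfolding glued_corners_def using glued_ends_touch next_corner_in_occs by blast

end

locale catacondensed_hexagonal_scheme = hexagonal_scheme S + flat_scheme S for S :: "'a scheme" +
  assumes catacondensed: "catacondensed S"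
begin

lemma not_shared_next_corner: "p \<in> occs S \<Longrightarrow> shared S p \<Longrightarrow> \<not> shared S (next_corner S p)"
  using catacondensed occ_count_eq_1_iff next_corner_in_occs unfolding catacondensed_def by metis

lemma not_shared_prev_corner: "p \<in> occs S \<Longrightarrow> shared S (prev_corner S p) \<Longrightarrow> \<not> shared S p"
  using not_shared_next_corner[OF prev_corner_in_occs] next_prev_corner by metis

lemma shared_side_at_corner_unique:
  assumes "c \<in> occs S" "p \<in> occs S" "q \<in> occs S" "shared S p" "shared S q"
    and "c = p \<or> c = next_corner S p" "c = q \<or> c = next_corner S q"
  shows "p = q"
  using assms sides_at_corner_iff not_shared_prev_corner by metis

lemma shared_sides_not_adjacent:
  assumes "p \<in> occs S" "q \<in> occs S" "shared S p" "shared S q" "fst p = fst q"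
  shows "snd q \<noteq> Suc (snd p) mod 6"
  using assms not_shared_next_corner[of p] next_corner_hexagonal[of p] by (metis prod.collapse)

text \<open>The corner \<open>d\<close> lies on a single shared side, so every gluing at \<open>d\<close> leads back to \<open>c\<close>.\<close>
lemma glued_corners_closed:
  assumes d: "d \<in> glued_corners S c" and "(d, e) \<in> glue S"
  shows "e \<in> glued_corners S c"
proof -
  obtain p' q' where p'q': "p' \<in> occs S" "q' \<in> occs S" "sym_at S p' = sym_at S q'" "glued_ends S p' q' d e"
    using \<open>(d, e) \<in> glue S\<close> glue_iff by blast
  consider "p' = q'" | "p' \<noteq> q'" "d = c" | "p' \<noteq> q'" "d \<noteq> c" by blast
  then show ?thesis
  proof cases
    case 1
    then have "e = d" using p'q'(4) unfolding glued_ends_def by auto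
    with d show ?thesis by simp
  next
    case 2
    then show ?thesis using p'q' unfolding glued_corners_def by blast
  next
    case 3
    then obtain p q where pq: "p \<in> occs S" "q \<in> occs S" "p \<noteq> q" "sym_at S p = sym_at S q"
      "glued_ends S p q c d"
      using d unfolding glued_corners_def by auto
    have "d \<in> occs S" using glued_ends_touch[OF pq(5)] next_corner_in_occs pq(2) by blast
    have "shared S q" "shared S p'"
      using shared_if_same_symbol pq p'q' 3 by metis+
    then have "p' = q"
      using shared_side_at_corner_unique[OF \<open>d \<in> occs S\<close> p'q'(1) pq(2)]
        glued_ends_touch[OF p'q'(4)] glued_ends_touch[OF pq(5)] by blast
    then have "q' = p" using same_symbol_cases[of q p q'] pq p'q' 3 by auto
    then have "e = c"
      using glued_ends_back[OF pq(5)] p'q'(4) \<open>p' = q\<close> tail_neq_head_at[OF pq(2)] by blast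
    then show ?thesis unfolding glued_corners_def by simp
  qed
qed

lemma vertex_of_eq_glued_corners: "vertex_of S c = glued_corners S c"
proof
  show "vertex_of S c \<subseteq> glued_corners S c"
  proof
    fix e assume "e \<in> vertex_of S c"
    then have "(c, e) \<in> (glue S)\<^sup>*" unfolding vertex_of_def by simp
    then show "e \<in> glued_corners S c"
    proof (induction rule: rtrancl_induct)
      case base
      then show ?case unfolding glued_corners_def by simp
    next
      case (step d e)
      then show ?case using glued_corners_closed by blast
    qed
  qed
qed (rule glued_corners_subset_vertex_of)

lemma vertex_in_edge_ends_iff:
  assumes "c \<in> occs S"
  shows "vertex_of S c \<in> edge_ends S e \<longleftrightarrow>
    (\<exists>d\<in>glued_corners S c. e = sym_at S d \<or> e = sym_at S (prev_corner S d))"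
proof -
  have "vertex_of S c \<in> edge_ends S e \<longleftrightarrow>
      (\<exists>p\<in>occs S. sym_at S p = e \<and> (p \<in> glued_corners S c \<or> next_corner S p \<in> glued_corners S c))"
    by (simp only: edge_ends_iff vertex_of_eq_iff) (simp only: vertex_of_eq_glued_corners)
  also have "\<dots> \<longleftrightarrow> (\<exists>d\<in>glued_corners S c. e = sym_at S d \<or> e = sym_at S (prev_corner S d))"
  proof
    assume "\<exists>p\<in>occs S. sym_at S p = e \<and> (p \<in> glued_corners S c \<or> next_corner S p \<in> glued_corners S c)"
    then obtain p where "p \<in> occs S" "sym_at S p = e" "p \<in> glued_corners S c \<or> next_corner S p \<in> glued_corners S c"
      by blast
    then show "\<exists>d\<in>glued_corners S c. e = sym_at S d \<or> e = sym_at S (prev_corner S d)"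
      using prev_next_corner by metis
  next
    assume "\<exists>d\<in>glued_corners S c. e = sym_at S d \<or> e = sym_at S (prev_corner S d)"
    then obtain d where d: "d \<in> glued_corners S c" "e = sym_at S d \<or> e = sym_at S (prev_corner S d)"
      by blast
    then have "d \<in> occs S" using glued_corners_subset_occs[OF assms] by blast
    with d show "\<exists>p\<in>occs S. sym_at S p = e \<and> (p \<in> glued_corners S c \<or> next_corner S p \<in> glued_corners S c)"
      using prev_corner_in_occs next_prev_corner by metis
  qed
  finally show ?thesis .
qed

lemma pure_or_balanced_shared_sides:
  "pure_or_balanced {p \<in> occs S. shared S p} fst (\<lambda>p. even (snd p))"
  unfolding pure_or_balanced_def
proof
  fix i
  let ?P = "{p \<in> occs S. shared S p}"
  show "(\<forall>p\<in>?P. \<forall>q\<in>?P. fst p = i \<and> fst q = i \<longrightarrow> even (snd p) = even (snd q)) \<or>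
    (\<exists>x y. {p \<in> ?P. fst p = i} = {x, y} \<and> even (snd x) \<noteq> even (snd y))"
  proof (cases "\<forall>p\<in>?P. \<forall>q\<in>?P. fst p = i \<and> fst q = i \<longrightarrow> even (snd p) = even (snd q)")
    case False
    then obtain x y where xy: "x \<in> ?P" "y \<in> ?P" "fst x = i" "fst y = i" "even (snd x) \<noteq> even (snd y)"
      by blast
    have nonadjacent: "snd b \<noteq> Suc (snd a) mod 6" if "a \<in> ?P" "b \<in> ?P" "fst a = fst b" for a b
      using that shared_sides_not_adjacent[of a b] by simp
    have "z \<in> {x, y}" if z: "z \<in> ?P" "fst z = i" for z
    proof -
      have "snd x < 6" "snd y < 6" "snd z < 6"
        using xy z occs_hexagonal_iff by auto
      from nonadjacent_hexagon_sides[OF this xy(5)] nonadjacent xy z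
      have "snd z = snd x \<or> snd z = snd y" by auto
      then show "z \<in> {x, y}" using xy z by (auto simp: prod_eq_iff)
    qed
    then have "{p \<in> ?P. fst p = i} = {x, y}" using xy by auto
    with xy show ?thesis by blast
  qed blast
qed

lemma exists_selection_covering_shared_edges:
  "\<exists>\<sigma>. \<forall>p\<in>occs S. \<forall>q\<in>occs S. p \<noteq> q \<and> sym_at S p = sym_at S q \<longrightarrow>
     selected_side \<sigma> p \<or> selected_side \<sigma> q"
proof -
  have "finite {p \<in> occs S. shared S p}" using finite_occs by (rule finite_subset[rotated]) blast
  from paired_clauses_satisfiable[OF this perfect_pairing_partner pure_or_balanced_shared_sides]
  obtain \<sigma> where \<sigma>: "\<forall>p\<in>{p \<in> occs S. shared S p}.
      selected_side \<sigma> p \<or> selected_side \<sigma> (partner S p)"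
    unfolding selected_side_def by blast
  have "selected_side \<sigma> p \<or> selected_side \<sigma> q"
    if "p \<in> occs S" "q \<in> occs S" "p \<noteq> q" "sym_at S p = sym_at S q" for p q
  proof -
    have "shared S p" using shared_if_same_symbol[of p S q] that by simp
    moreover have "partner S p = q" using partner_eq that by simp
    ultimately show ?thesis using bspec[OF \<sigma>, of p] that(1) by simp
  qed
  then show ?thesis by blast
qed

lemma glued_corners_unshared:
  assumes "c \<in> occs S" "\<not> shared S c" "\<not> shared S (prev_corner S c)"
  shows "glued_corners S c = {c}"
proof -
  have False if "p \<in> occs S" "q \<in> occs S" "p \<noteq> q" "sym_at S p = sym_at S q" "glued_ends S p q c d" for p q d
  proof -
    have "shared S p" using shared_if_same_symbol[of p S q] that by simp
    moreover have "p = c \<or> p = prev_corner S c"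
      using glued_ends_touch[OF that(5)] sides_at_corner_iff[OF that(1) assms(1)] by blast
    ultimately show False using assms by blast
  qed
  then show ?thesis unfolding glued_corners_def by blast
qed

lemma glued_corners_shared:
  assumes c: "c \<in> occs S" and s: "s \<in> occs S" "shared S s" "s = c \<or> s = prev_corner S c"
  obtains c' where "glued_ends S s (partner S s) c c'" "glued_corners S c = {c, c'}"
proof -
  let ?t = "partner S s"
  define c' where "c' = (if c = tail_at S s then tail_at S ?t else head_at S ?t)"
  have "c \<in> {tail_at S s, head_at S s}"
    using s(3) sides_at_corner_iff[OF s(1) c] by (simp only: tail_head_at) blast
  then have c': "glued_ends S s ?t c c'" unfolding c'_def glued_ends_def by auto
  have "d = c'" if d: "d \<in> glued_corners S c" "d \<noteq> c" for d
  proof -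
    obtain p q where pq: "p \<in> occs S" "q \<in> occs S" "p \<noteq> q" "sym_at S p = sym_at S q"
      "glued_ends S p q c d"
      using d unfolding glued_corners_def by blast
    have "shared S p" using shared_if_same_symbol[of p S q] pq by simp
    then have "p = s"
      using shared_side_at_corner_unique[OF c pq(1) s(1) _ s(2)] glued_ends_touch[OF pq(5)]
        sides_at_corner_iff[OF s(1) c] s(3) by blast
    moreover have "q = ?t" using partner_eq pq \<open>p = s\<close> by simp
    ultimately show "d = c'" using glued_ends_unique[OF c' _ tail_neq_head_at[OF s(1)]] pq(5) by blast
  qed
  moreover have "c' \<in> glued_corners S c"
  proof -
    note t = shared_partner[OF s(2)]
    have "\<exists>p\<in>occs S. \<exists>q\<in>occs S. p \<noteq> q \<and> sym_at S p = sym_at S q \<and> glued_ends S p q c c'"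
      using s(1) t(1) t(2)[symmetric] t(3)[symmetric] c' by blast
    then show ?thesis unfolding glued_corners_def by blast
  qed
  ultimately have "glued_corners S c = {c, c'}" unfolding glued_corners_def by blast
  with c' show thesis by (rule that)
qed

lemma other_side_at_corner:
  assumes "c \<in> occs S" "s = c \<or> s = prev_corner S c" "shared S s"
  obtains u where "{c, prev_corner S c} = {s, u}" "\<not> shared S u" "u \<in> occs S"
    "selected_side \<sigma> u \<longleftrightarrow> \<not> selected_side \<sigma> s"
  using assms that not_shared_prev_corner prev_corner_in_occs selected_side_prev_corner by blast

context
  fixes \<sigma> :: "nat \<Rightarrow> bool"
  assumes covering: "\<And>p q. p \<in> occs S \<Longrightarrow> q \<in> occs S \<Longrightarrow> p \<noteq> q \<Longrightarrow> sym_at S p = sym_at S q \<Longrightarrow>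
    selected_side \<sigma> p \<or> selected_side \<sigma> q"
begin

text \<open>The ends of a side can only be glued together through its two neighbours, which are
  unselected when the side is selected.\<close>
lemma selected_edge_ends_distinct:
  assumes p0: "p0 \<in> occs S" "selected_side \<sigma> p0"
  shows "vertex_of S p0 \<noteq> vertex_of S (next_corner S p0)"
proof
  assume "vertex_of S p0 = vertex_of S (next_corner S p0)"
  then have "next_corner S p0 \<in> glued_corners S p0"
    using vertex_of_eq_iff vertex_of_eq_glued_corners by metis
  then obtain p q where pq: "p \<in> occs S" "q \<in> occs S" "p \<noteq> q" "sym_at S p = sym_at S q"
    "glued_ends S p q p0 (next_corner S p0)"
    unfolding glued_corners_def using next_corner_neq[OF p0(1)] by auto
  have shared: "shared S p" "shared S q"
    using shared_if_same_symbol[of p S q] pq by simp_all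
  have p: "p0 = p \<or> p0 = next_corner S p" and q: "next_corner S p0 = q \<or> next_corner S p0 = next_corner S q"
    using glued_ends_touch[OF pq(5)] by auto
  show False
  proof (cases "shared S p0")
    case True
    have "p = p0" "q = p0"
      using shared_side_at_corner_unique[OF p0(1) pq(1) p0(1) shared(1) True] p
        shared_side_at_corner_unique[OF next_corner_in_occs[OF p0(1)] pq(2) p0(1) shared(2) True] q
      by auto
    with pq(3) show False by simp
  next
    case False
    then have "p = prev_corner S p0" "q = next_corner S p0"
      using p q shared sides_at_corner_iff[OF pq(1) p0(1)] sides_at_corner_iff[OF pq(2) next_corner_in_occs[OF p0(1)]]
        prev_next_corner[OF p0(1)] by auto
    then have "\<not> selected_side \<sigma> p" "\<not> selected_side \<sigma> q"
      using p0 selected_side_prev_corner selected_side_next_corner by auto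
    with covering pq show False by blast
  qed
qed

lemma card_edge_ends_kekule_edge:
  assumes "a \<in> kekule_edges S \<sigma>"
  shows "card (edge_ends S a) = 2"
proof -
  obtain p where p: "p \<in> occs S" "a = sym_at S p" "selected_side \<sigma> p"
    using assms unfolding kekule_edges_def symbols_def by auto
  then show ?thesis by (simp add: edge_ends_sym_at selected_edge_ends_distinct)
qed

lemma unique_kekule_edge_at_unshared_corner:
  assumes c: "c \<in> occs S" "\<not> shared S c" "\<not> shared S (prev_corner S c)"
  shows "\<exists>!e. e \<in> kekule_edges S \<sigma> \<and> vertex_of S c \<in> edge_ends S e"
proof -
  have "vertex_of S c \<in> edge_ends S e \<longleftrightarrow> e = sym_at S c \<or> e = sym_at S (prev_corner S c)" for e
    using vertex_in_edge_ends_iff[OF c(1)] glued_corners_unshared[OF c] by simp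
  moreover have "sym_at S c \<in> kekule_edges S \<sigma> \<longleftrightarrow> selected_side \<sigma> c"
    and "sym_at S (prev_corner S c) \<in> kekule_edges S \<sigma> \<longleftrightarrow> \<not> selected_side \<sigma> c"
    using kekule_edge_iff_unshared[OF c(1,2)] kekule_edge_iff_unshared[OF prev_corner_in_occs[OF c(1)] c(3)]
      selected_side_prev_corner[OF c(1)] by simp_all
  ultimately show ?thesis by (cases "selected_side \<sigma> c") auto
qed

lemma unique_kekule_edge_at_shared_corner:
  assumes c: "c \<in> occs S" and s: "s = c \<or> s = prev_corner S c" "shared S s"
  shows "\<exists>!e. e \<in> kekule_edges S \<sigma> \<and> vertex_of S c \<in> edge_ends S e"
proof -
  let ?t = "partner S s"
  have s_occ: "s \<in> occs S" using s(1) c prev_corner_in_occs[OF c] by auto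
  obtain u where u: "{c, prev_corner S c} = {s, u}" "\<not> shared S u" "u \<in> occs S"
      "selected_side \<sigma> u \<longleftrightarrow> \<not> selected_side \<sigma> s"
    using other_side_at_corner[OF c s] .
  obtain c' where c': "glued_ends S s ?t c c'" "glued_corners S c = {c, c'}"
    using glued_corners_shared[OF c s_occ s(2) s(1)] .
  note t = shared_partner[OF s(2)]
  have t_shared: "shared S ?t" using shared_if_same_symbol[OF s_occ t(1) t(2)[symmetric] t(3)] by simp
  have c'_occ: "c' \<in> occs S" using glued_ends_touch[OF c'(1)] t(1) next_corner_in_occs by blast
  have "?t = c' \<or> ?t = prev_corner S c'"
    using glued_ends_touch[OF c'(1)] sides_at_corner_iff[OF t(1) c'_occ] by blast
  then obtain u' where u': "{c', prev_corner S c'} = {?t, u'}" "\<not> shared S u'" "u' \<in> occs S"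
      "selected_side \<sigma> u' \<longleftrightarrow> \<not> selected_side \<sigma> ?t"
    using other_side_at_corner[OF c'_occ _ t_shared] by blast
  have sides: "{c, prev_corner S c, c', prev_corner S c'} = {s, u, ?t, u'}"
    using u(1) u'(1) by auto
  have at_vertex: "vertex_of S c \<in> edge_ends S e \<longleftrightarrow>
      e = sym_at S s \<or> e = sym_at S u \<or> e = sym_at S u'" for e
  proof -
    have "vertex_of S c \<in> edge_ends S e \<longleftrightarrow> e \<in> sym_at S ` {c, prev_corner S c, c', prev_corner S c'}"
      unfolding vertex_in_edge_ends_iff[OF c] c'(2) by auto
    then show ?thesis unfolding sides using t(3) by auto
  qed
  have "sym_at S s \<in> kekule_edges S \<sigma> \<longleftrightarrow> selected_side \<sigma> s \<and> selected_side \<sigma> ?t"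
    using kekule_edge_iff_shared[OF s_occ t(1) t(2)[symmetric] t(3)] .
  moreover have "sym_at S u \<in> kekule_edges S \<sigma> \<longleftrightarrow> \<not> selected_side \<sigma> s"
    and "sym_at S u' \<in> kekule_edges S \<sigma> \<longleftrightarrow> \<not> selected_side \<sigma> ?t"
    using kekule_edge_iff_unshared[OF u(3) u(2)] kekule_edge_iff_unshared[OF u'(3) u'(2)] u(4) u'(4)
    by simp_all
  moreover have "selected_side \<sigma> s \<or> selected_side \<sigma> ?t"
    using covering[OF s_occ t(1) t(2)[symmetric] t(3)[symmetric]] .
  ultimately show ?thesis unfolding at_vertex
    by (cases "selected_side \<sigma> s"; cases "selected_side \<sigma> ?t") auto
qed

lemma perfect_matching_kekule_edges:
  "perfect_matching (vertices S) (symbols S) (edge_ends S) (kekule_edges S \<sigma>)"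
  unfolding perfect_matching_def
proof (intro conjI ballI)
  show "kekule_edges S \<sigma> \<subseteq> symbols S" unfolding kekule_edges_def by blast
next
  fix a assume "a \<in> kekule_edges S \<sigma>"
  then show "card (edge_ends S a) = 2" by (rule card_edge_ends_kekule_edge)
next
  fix v assume "v \<in> vertices S"
  then obtain c where c: "c \<in> occs S" "v = vertex_of S c"
    unfolding vertices_def corners_def by blast
  show "\<exists>!e. e \<in> kekule_edges S \<sigma> \<and> v \<in> edge_ends S e"
  proof (cases "shared S c \<or> shared S (prev_corner S c)")
    case True
    then show ?thesis using unique_kekule_edge_at_shared_corner[OF c(1)] c(2) by blast
  next
    case False
    then show ?thesis using unique_kekule_edge_at_unshared_corner[OF c(1)] c(2) by blast
  qed
qed

end

theorem kekulean: "kekulean S"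
  using exists_selection_covering_shared_edges perfect_matching_kekule_edges
  unfolding kekulean_def by blast

end

theorem mainTheorem1:
  fixes B :: "'a scheme"
  assumes "cata_flat_hex_complex B"
  shows "kekulean B"
proof -
  from assms interpret catacondensed_hexagonal_scheme B
    unfolding cata_flat_hex_complex_def by unfold_locales auto
  show ?thesis by (rule kekulean)
qed

end
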